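(* Let $p\ge 2$, let $\Sigma^*$ be a $p\times p$ positive definite matrix, $\Omega^*=(\Sigma^* )^{-1}=(\omega^*_{ij})$, $\phi^*_j=1/\omega^*_{jj}$, $B^*_{ij}=\omega^*_{ij}/\omega^*_{jj}$. For $n\ge1$ let $\mathbf X\in\mathbb R^{n\times p}$ have i.i.d.\ rows $\mathcal N_p(0,\Sigma^* )$, $S_n=\frac1n\mathbf X^\top\mathbf X$, and define the relaxed maximum likelihood estimator (with the regression matrix known exactly) $$\hat\phi^{\rm RML}_j=\max\{(S_nB^* )_{jj},\,0\},\qquad j\in[p].$$ Then for every $j\in[p]$ there is a constant $C<\infty$ depending only on $\phi^*_j$ and $\Sigma^*_{jj}$ such that for all $n\ge1$, $$\mathbf E\big[(\hat\phi^{\rm RML}_j-\phi^*_j)^2\big]\ge \frac{(\phi^*_j)^2+\phi^*_j\Sigma^*_{jj}}{n}-\frac{C}{n^{3/2}}.$$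
   Context: $[p]=\{1,\dots,p\}$; $\Sigma^*_{jj}$ is the $j$-th diagonal entry of $\Sigma^*$. *)

theory Defs
  imports "HOL-Probability.Probability"
begin

definition pos_def_mat :: "real^'p^'p \<Rightarrow> bool" where
  "pos_def_mat S \<longleftrightarrow> transpose S = S \<and> (\<forall>x::real^'p. x \<noteq> 0 \<longrightarrow> x \<bullet> (S *v x) > 0)"

definition mvn_density :: "real^'p^'p \<Rightarrow> real^'p \<Rightarrow> real" where
  "mvn_density S x =
     exp (- (x \<bullet> (matrix_inv S *v x)) / 2) / sqrt ((2 * pi) ^ CARD('p) * det S)"

definition prec :: "real^'p^'p \<Rightarrow> real^'p^'p" where
  "prec S = matrix_inv S"

definition phi_star :: "real^'p^'p \<Rightarrow> 'p \<Rightarrow> real" where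
  "phi_star S j = 1 / (prec S $ j $ j)"

definition B_star :: "real^'p^'p \<Rightarrow> real^'p^'p" where
  "B_star S = (\<chi> i j. prec S $ i $ j / prec S $ j $ j)"

text \<open>Sample covariance S_n = (1/n) X^T X, where row i of X is the vector x i.\<close>
definition sample_cov :: "nat \<Rightarrow> (nat \<Rightarrow> real^'p) \<Rightarrow> real^'p^'p" where
  "sample_cov n x = (1 / real n) *\<^sub>R (\<Sum>i<n. (\<chi> a b. x i $ a * x i $ b))"

definition phi_RML :: "real^'p^'p \<Rightarrow> nat \<Rightarrow> (nat \<Rightarrow> real^'p) \<Rightarrow> 'p \<Rightarrow> real" where
  "phi_RML S n x j = max ((sample_cov n x ** B_star S) $ j $ j) 0"

end

theory Submission
  imports Defs
begin

text \<open>Let \<open>b\<close> be the \<open>j\<close>-th column of \<open>B\<^sup>*\<close>; then \<open>\<Sigma>\<^sup>* b = \<phi>\<^sup>*\<^sub>j e\<^sub>j\<close>, and \<open>(S\<^sub>n B\<^sup>*)\<^sub>j\<^sub>j\<close>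
  is the sample mean \<open>T\<close> of the i.i.d. products \<open>W\<^sub>i = X\<^sub>i\<^sub>j (b \<bullet> X\<^sub>i)\<close> of two jointly Gaussian
  variables. Gaussian moments (read off the moment generating function) and Isserlis' formula
  give \<open>E W = \<phi>\<^sup>*\<^sub>j\<close>, \<open>Var W = (\<phi>\<^sup>*\<^sub>j)\<^sup>2 + \<phi>\<^sup>*\<^sub>j \<Sigma>\<^sup>*\<^sub>j\<^sub>j\<close> and a bound on the fourth central
  moment, hence \<open>E (T - \<phi>)\<^sup>2 = Var W / n\<close> and \<open>E (T - \<phi>)\<^sup>4 = O(1/n\<^sup>2)\<close>. Truncating at \<open>0\<close>
  can only help when \<open>T < 0 < \<phi>\<close>, i.e. when \<open>|T - \<phi>| > \<phi>\<close>, so pointwise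
  \<open>(max T 0 - \<phi>)\<^sup>2 \<ge> (T - \<phi>)\<^sup>2 - (T - \<phi>)\<^sup>4 / \<phi>\<^sup>2\<close>; taking expectations gives the bound
  with an error of order \<open>1/n\<^sup>2 \<le> 1/n\<^sup>3\<^sup>/\<^sup>2\<close>.\<close>

lemma real_powser_coeffs_unique:
  fixes a b :: "nat \<Rightarrow> real"
  assumes "\<And>x. (\<lambda>n. a n * x ^ n) sums f x" and "\<And>x. (\<lambda>n. b n * x ^ n) sums f x"
  shows "a = b"
proof -
  define c where "c n = a n - b n" for n
  have c_sums: "(\<lambda>n. c n * x ^ n) sums 0" for x
    using sums_diff[OF assms(1)[of x] assms(2)[of x]] by (simp add: c_def algebra_simps)
  have "c m = 0" for m
  proof (induction m rule: less_induct)
    case (less m)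
    have tail_sums: "(\<lambda>n. c (n + m) * x ^ n) sums 0" if "x \<noteq> 0" for x
    proof -
      have "(\<lambda>n. c (n + m) * x ^ (n + m)) sums (0 - (\<Sum>n<m. c n * x ^ n))"
        using sums_split_initial_segment[OF c_sums[of x], of m] by simp
      then have "(\<lambda>n. c (n + m) * x ^ (n + m) / x ^ m) sums 0"
        using less sums_divide by fastforce
      then show ?thesis using that by (simp add: power_add)
    qed
    have "((\<lambda>x::real. 0) \<longlongrightarrow> c (0 + m)) (at 0)"
      using powser_limit_0_strong[of 1 "\<lambda>n. c (n + m)" "\<lambda>_. 0"] tail_sums by simp
    then show ?case by (simp add: tendsto_const_iff)
  qed
  then show ?thesis by (auto simp: c_def fun_eq_iff)
qed

lemma exp_square_half_powser:
  fixes s t :: real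
  shows "(\<lambda>n. (if even n then (s/2) ^ (n div 2) / fact (n div 2) else 0) * t ^ n) sums exp (t\<^sup>2 * s / 2)"
proof -
  have "(if even (2*k) then (s/2) ^ (2*k div 2) / fact (2*k div 2) else 0) * t ^ (2*k)
      = (t\<^sup>2 * s / 2) ^ k /\<^sub>R fact k" for k
    by (simp add: power_mult power_mult_distrib power_divide field_simps flip: power_mult)
  then have "(\<lambda>k. (if even (2*k) then (s/2) ^ (2*k div 2) / fact (2*k div 2) else 0) * t ^ (2*k))
      sums exp (t\<^sup>2 * s / 2)"
    using exp_converges[of "t\<^sup>2 * s / 2"] by simp
  then show ?thesis
    by (subst (asm) sums_mono_reindex[of "\<lambda>k. 2*k"]) (auto simp: strict_mono_def)
qed

lemma nn_integral_cosh_eq_half_sum: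
  fixes W :: "'a \<Rightarrow> real"
  assumes [measurable]: "W \<in> borel_measurable M"
  shows "(\<integral>\<^sup>+\<omega>. ennreal (cosh (t * W \<omega>)) \<partial>M)
    = ennreal (1/2) * ((\<integral>\<^sup>+\<omega>. ennreal (exp (t * W \<omega>)) \<partial>M) + (\<integral>\<^sup>+\<omega>. ennreal (exp ((-t) * W \<omega>)) \<partial>M))"
proof -
  have "ennreal (cosh x) = ennreal (1/2) * (ennreal (exp x) + ennreal (exp (- x)))" for x
  proof -
    have "ennreal (1/2) * (ennreal (exp x) + ennreal (exp (- x))) = ennreal (1/2) * ennreal (exp x + exp (- x))"
      by (subst ennreal_plus) auto
    also have "\<dots> = ennreal (cosh x)"
      by (subst ennreal_mult[symmetric]) (auto simp: cosh_field_def)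
    finally show ?thesis ..
  qed
  then show ?thesis by (simp add: nn_integral_cmult nn_integral_add)
qed

text \<open>Monotone convergence applied to the Taylor series of \<open>cosh\<close>, which has nonnegative terms.\<close>

lemma nn_integral_cosh_eq_suminf_moments:
  fixes W :: "'a \<Rightarrow> real"
  assumes [measurable]: "W \<in> borel_measurable M"
  shows "(\<integral>\<^sup>+\<omega>. ennreal (cosh (t * W \<omega>)) \<partial>M)
    = (\<Sum>n. ennreal (if even n then t ^ n / fact n else 0) * (\<integral>\<^sup>+\<omega>. ennreal (W \<omega> ^ n) \<partial>M))"
proof -
  define c where "c n = (if even n then t ^ n / fact n else 0)" for n
  have "ennreal (cosh (t * W \<omega>)) = (\<Sum>n. ennreal (c n * W \<omega> ^ n))" for \<omega>
  proof (intro suminf_ennreal_eq[symmetric])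
    have "(\<lambda>n. c n * W \<omega> ^ n) = (\<lambda>n. if even n then (t * W \<omega>) ^ n /\<^sub>R fact n else 0)"
      by (auto simp: fun_eq_iff c_def power_mult_distrib divide_inverse)
    then show "(\<lambda>n. c n * W \<omega> ^ n) sums cosh (t * W \<omega>)"
      using cosh_converges[of "t * W \<omega>"] by simp
  qed (auto simp: c_def)
  then have "(\<integral>\<^sup>+\<omega>. ennreal (cosh (t * W \<omega>)) \<partial>M) = (\<Sum>n. \<integral>\<^sup>+\<omega>. ennreal (c n * W \<omega> ^ n) \<partial>M)"
    by (simp add: nn_integral_suminf)
  also have "\<dots> = (\<Sum>n. ennreal (c n) * (\<integral>\<^sup>+\<omega>. ennreal (W \<omega> ^ n) \<partial>M))"
  proof (intro suminf_cong)
    fix n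
    show "(\<integral>\<^sup>+\<omega>. ennreal (c n * W \<omega> ^ n) \<partial>M) = ennreal (c n) * (\<integral>\<^sup>+\<omega>. ennreal (W \<omega> ^ n) \<partial>M)"
    proof (cases "even n")
      case True
      then have "ennreal (c n * W \<omega> ^ n) = ennreal (c n) * ennreal (W \<omega> ^ n)" for \<omega>
        by (intro ennreal_mult) (auto simp: c_def zero_le_even_power)
      then show ?thesis by (simp add: nn_integral_cmult)
    qed (simp add: c_def)
  qed
  finally show ?thesis by (simp add: c_def)
qed

text \<open>The expectation of \<open>cosh (t W)\<close> is \<open>exp (t\<^sup>2 s / 2)\<close>; its expansion into moments is a
  power series in \<open>t\<close> which must coincide with that of \<open>exp (t\<^sup>2 s / 2)\<close>.\<close>

lemma (in prob_space) even_moments_of_gaussian_mgf: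
  fixes W :: "'a \<Rightarrow> real"
  assumes [measurable]: "W \<in> borel_measurable M" and "s \<ge> 0"
    and mgf: "\<And>t. (\<integral>\<^sup>+\<omega>. ennreal (exp (t * W \<omega>)) \<partial>M) = ennreal (exp (t\<^sup>2 * s / 2))"
  shows "integrable M (\<lambda>\<omega>. W \<omega> ^ (2*k))"
    and "expectation (\<lambda>\<omega>. W \<omega> ^ (2*k)) = fact (2*k) / (2^k * fact k) * s^k"
proof -
  define c where "c t n = (if even n then t ^ n / fact n else 0)" for t :: real and n :: nat
  define \<mu> where "\<mu> n = (\<integral>\<^sup>+\<omega>. ennreal (W \<omega> ^ n) \<partial>M)" for n
  have moment_series: "(\<Sum>n. ennreal (c t n) * \<mu> n) = ennreal (exp (t\<^sup>2 * s / 2))" for t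
  proof -
    have "ennreal (1/2) * (ennreal (exp (t\<^sup>2 * s / 2)) + ennreal (exp (t\<^sup>2 * s / 2)))
        = ennreal (1/2) * ennreal (2 * exp (t\<^sup>2 * s / 2))"
      by (subst ennreal_plus[symmetric]) auto
    also have "\<dots> = ennreal (exp (t\<^sup>2 * s / 2))"
      by (subst ennreal_mult[symmetric]) auto
    finally show ?thesis
      using nn_integral_cosh_eq_half_sum[of W M t] nn_integral_cosh_eq_suminf_moments[of W M t] mgf[of "-t"]
      by (simp add: mgf c_def \<mu>_def)
  qed
  have moment_finite: "\<mu> n < top" if "even n" for n
  proof -
    have "ennreal (c 1 n) * \<mu> n \<le> (\<Sum>n. ennreal (c 1 n) * \<mu> n)"
      using sum_le_suminf[OF summableI, of "{n}" "\<lambda>n. ennreal (c 1 n) * \<mu> n"] by simp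
    also have "\<dots> < top" by (simp add: moment_series)
    finally show ?thesis
      using that by (auto simp: ennreal_mult_less_top c_def)
  qed
  define m where "m n = expectation (\<lambda>\<omega>. W \<omega> ^ n)" for n
  have moment_integrable: "integrable M (\<lambda>\<omega>. W \<omega> ^ n)"
    and moment_eq: "\<mu> n = ennreal (m n)" and moment_nonneg: "m n \<ge> 0"
    if "even n" for n
  proof -
    from moment_finite[OF that] obtain r where r: "\<mu> n = ennreal r" "r \<ge> 0"
      by (cases "\<mu> n" rule: ennreal_cases) auto
    show I: "integrable M (\<lambda>\<omega>. W \<omega> ^ n)"
      by (rule integrableI_nn_integral_finite[where x=r])
        (use r that in \<open>auto simp: \<mu>_def zero_le_even_power\<close>)
    show "\<mu> n = ennreal (m n)" unfolding \<mu>_def m_def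
      by (rule nn_integral_eq_integral[OF I]) (use that in \<open>auto simp: zero_le_even_power\<close>)
    show "m n \<ge> 0" unfolding m_def
      by (rule integral_nonneg_AE) (use that in \<open>auto simp: zero_le_even_power\<close>)
  qed
  define a where "a n = (if even n then m n / fact n else 0)" for n
  have a_sums: "(\<lambda>n. a n * t ^ n) sums exp (t\<^sup>2 * s / 2)" for t
  proof -
    have "ennreal (c t n) * \<mu> n = ennreal (a n * t ^ n)" for n
      by (cases "even n")
        (auto simp: c_def a_def moment_eq moment_nonneg ennreal_mult[symmetric] zero_le_even_power mult_ac)
    moreover have "a n * t ^ n \<ge> 0" for n
      by (cases "even n") (auto simp: a_def moment_nonneg zero_le_even_power)
    ultimately show ?thesis
      using summable_sums[OF summableI, of "\<lambda>n. ennreal (c t n) * \<mu> n"] moment_series[of t] by simp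
  qed
  have "a (2*k) = (s/2) ^ k / fact k"
    using fun_cong[OF real_powser_coeffs_unique[OF a_sums exp_square_half_powser], of "2*k"] by simp
  then show "expectation (\<lambda>\<omega>. W \<omega> ^ (2*k)) = fact (2*k) / (2^k * fact k) * s^k"
    by (simp add: a_def m_def field_simps power_divide)
  show "integrable M (\<lambda>\<omega>. W \<omega> ^ (2*k))" by (rule moment_integrable) simp
qed

lemma abs_power_le_one_plus_even_power:
  fixes x :: real
  assumes "k \<le> m" and "even m"
  shows "\<bar>x\<bar> ^ k \<le> 1 + x ^ m"
proof (cases "\<bar>x\<bar> \<le> 1")
  case True
  then have "\<bar>x\<bar> ^ k \<le> 1" by (simp add: power_le_one)
  then show ?thesis using zero_le_even_power[OF \<open>even m\<close>, of x] by linarith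
next
  case False
  then have "\<bar>x\<bar> ^ k \<le> \<bar>x\<bar> ^ m" using assms by (intro power_increasing) auto
  then show ?thesis using \<open>even m\<close> by (simp add: power_even_abs)
qed

context prob_space
begin

lemma integrable_power_le_even_power:
  fixes f :: "'a \<Rightarrow> real"
  assumes [measurable]: "f \<in> borel_measurable M"
    and "integrable M (\<lambda>\<omega>. f \<omega> ^ m)" and "k \<le> m" and "even m"
  shows "integrable M (\<lambda>\<omega>. f \<omega> ^ k)"
proof (rule Bochner_Integration.integrable_bound)
  show "integrable M (\<lambda>\<omega>. 1 + f \<omega> ^ m)" using assms(2) by simp
  show "AE \<omega> in M. norm (f \<omega> ^ k) \<le> norm (1 + f \<omega> ^ m)"
    using abs_power_le_one_plus_even_power[OF assms(3,4)]
    by (simp add: power_abs zero_le_even_power[OF \<open>even m\<close>] add_nonneg_nonneg)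
qed measurable

lemma indep_var_power_product:
  fixes A B :: "'a \<Rightarrow> real"
  assumes indep: "indep_var borel A borel B"
    and "integrable M (\<lambda>\<omega>. A \<omega> ^ 4)" and "integrable M (\<lambda>\<omega>. B \<omega> ^ 4)"
    and "k \<le> 4" and "l \<le> 4"
  shows "integrable M (\<lambda>\<omega>. A \<omega> ^ k * B \<omega> ^ l)"
    and "expectation (\<lambda>\<omega>. A \<omega> ^ k * B \<omega> ^ l) = expectation (\<lambda>\<omega>. A \<omega> ^ k) * expectation (\<lambda>\<omega>. B \<omega> ^ l)"
proof -
  have [measurable]: "A \<in> borel_measurable M" "B \<in> borel_measurable M"
    using indep_var_rv1[OF indep] indep_var_rv2[OF indep] by auto
  have "indep_var borel ((\<lambda>x. x ^ k) \<circ> A) borel ((\<lambda>x. x ^ l) \<circ> B)"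
    by (rule indep_var_compose[OF indep]) measurable
  then have indep_powers: "indep_var borel (\<lambda>\<omega>. A \<omega> ^ k) borel (\<lambda>\<omega>. B \<omega> ^ l)"
    by (simp add: comp_def)
  have "integrable M (\<lambda>\<omega>. A \<omega> ^ k)" "integrable M (\<lambda>\<omega>. B \<omega> ^ l)"
    using assms by (auto intro: integrable_power_le_even_power)
  then show "integrable M (\<lambda>\<omega>. A \<omega> ^ k * B \<omega> ^ l)"
    and "expectation (\<lambda>\<omega>. A \<omega> ^ k * B \<omega> ^ l) = expectation (\<lambda>\<omega>. A \<omega> ^ k) * expectation (\<lambda>\<omega>. B \<omega> ^ l)"
    by (auto intro: indep_var_integrable[OF indep_powers] indep_var_lebesgue_integral[OF indep_powers])
qed

lemma indep_var_partial_sum: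
  fixes D :: "nat \<Rightarrow> 'a \<Rightarrow> real"
  assumes indep: "indep_vars (\<lambda>_. borel) D {..<n}" and "m < n"
  shows "indep_var borel (\<lambda>\<omega>. \<Sum>i<m. D i \<omega>) borel (D m)"
proof -
  have "indep_var (PiM {..<m} (\<lambda>_. borel)) (\<lambda>\<omega>. restrict (\<lambda>i. D i \<omega>) {..<m})
      (PiM {m} (\<lambda>_. borel)) (\<lambda>\<omega>. restrict (\<lambda>i. D i \<omega>) {m})"
    by (rule indep_var_restrict[OF indep]) (use \<open>m < n\<close> in auto)
  then have "indep_var borel ((\<lambda>f. \<Sum>i<m. f i) \<circ> (\<lambda>\<omega>. restrict (\<lambda>i. D i \<omega>) {..<m}))
      borel ((\<lambda>f. f m) \<circ> (\<lambda>\<omega>. restrict (\<lambda>i. D i \<omega>) {m}))"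
    by (rule indep_var_compose) measurable
  then show ?thesis by (simp add: comp_def)
qed

text \<open>For centred independent summands the odd cross moments vanish.\<close>

lemma indep_var_centred_add_moments:
  fixes A B :: "'a \<Rightarrow> real"
  assumes indep: "indep_var borel A borel B"
    and A4: "integrable M (\<lambda>\<omega>. A \<omega> ^ 4)" and B4: "integrable M (\<lambda>\<omega>. B \<omega> ^ 4)"
    and "expectation A = 0" and "expectation B = 0"
  shows "integrable M (\<lambda>\<omega>. (A \<omega> + B \<omega>) ^ 4)"
    and "expectation (\<lambda>\<omega>. (A \<omega> + B \<omega>)\<^sup>2) = expectation (\<lambda>\<omega>. A \<omega> ^ 2) + expectation (\<lambda>\<omega>. B \<omega> ^ 2)"
    and "expectation (\<lambda>\<omega>. (A \<omega> + B \<omega>) ^ 4)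
      = expectation (\<lambda>\<omega>. A \<omega> ^ 4) + 6 * expectation (\<lambda>\<omega>. A \<omega> ^ 2) * expectation (\<lambda>\<omega>. B \<omega> ^ 2)
        + expectation (\<lambda>\<omega>. B \<omega> ^ 4)"
proof -
  note product = indep_var_power_product[OF indep A4 B4]
  have [measurable]: "A \<in> borel_measurable M" "B \<in> borel_measurable M"
    using indep_var_rv1[OF indep] indep_var_rv2[OF indep] by auto
  have I2: "integrable M (\<lambda>\<omega>. A \<omega> ^ 2)" "integrable M (\<lambda>\<omega>. B \<omega> ^ 2)"
    using A4 B4 by (auto intro: integrable_power_le_even_power)
  have expand4: "(A \<omega> + B \<omega>) ^ 4 = A \<omega> ^ 4 + 4 * (A \<omega> ^ 3 * B \<omega> ^ 1) + 6 * (A \<omega> ^ 2 * B \<omega> ^ 2)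
      + 4 * (A \<omega> ^ 1 * B \<omega> ^ 3) + B \<omega> ^ 4" for \<omega>
    by (simp add: power2_eq_square power3_eq_cube power4_eq_xxxx algebra_simps)
  have expand2: "(A \<omega> + B \<omega>)\<^sup>2 = A \<omega> ^ 2 + 2 * (A \<omega> ^ 1 * B \<omega> ^ 1) + B \<omega> ^ 2" for \<omega>
    by (simp add: power2_eq_square algebra_simps)
  show "integrable M (\<lambda>\<omega>. (A \<omega> + B \<omega>) ^ 4)"
    unfolding expand4 using A4 B4 product(1)[of 3 1] product(1)[of 2 2] product(1)[of 1 3] by simp
  show "expectation (\<lambda>\<omega>. (A \<omega> + B \<omega>)\<^sup>2) = expectation (\<lambda>\<omega>. A \<omega> ^ 2) + expectation (\<lambda>\<omega>. B \<omega> ^ 2)"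
    unfolding expand2 using I2 product[of 1 1] assms(4,5) by simp
  show "expectation (\<lambda>\<omega>. (A \<omega> + B \<omega>) ^ 4)
      = expectation (\<lambda>\<omega>. A \<omega> ^ 4) + 6 * expectation (\<lambda>\<omega>. A \<omega> ^ 2) * expectation (\<lambda>\<omega>. B \<omega> ^ 2)
        + expectation (\<lambda>\<omega>. B \<omega> ^ 4)"
    unfolding expand4 using A4 B4 assms(4,5) product(1)[of 3 1] product(1)[of 2 2] product(1)[of 1 3]
      product(2)[of 3 1] product(2)[of 2 2] product(2)[of 1 3]
    by simp
qed

lemma centred_indep_sum_moments:
  fixes D :: "nat \<Rightarrow> 'a \<Rightarrow> real"
  assumes indep: "indep_vars (\<lambda>_. borel) D {..<n}"
    and D4: "\<And>i. i < n \<Longrightarrow> integrable M (\<lambda>\<omega>. D i \<omega> ^ 4)"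
    and E1: "\<And>i. i < n \<Longrightarrow> expectation (D i) = 0"
    and E2: "\<And>i. i < n \<Longrightarrow> expectation (\<lambda>\<omega>. D i \<omega> ^ 2) = V"
    and E4: "\<And>i. i < n \<Longrightarrow> expectation (\<lambda>\<omega>. D i \<omega> ^ 4) \<le> K"
  shows "integrable M (\<lambda>\<omega>. (\<Sum>i<n. D i \<omega>) ^ 4)"
    and "expectation (\<lambda>\<omega>. (\<Sum>i<n. D i \<omega>)\<^sup>2) = n * V"
    and "expectation (\<lambda>\<omega>. (\<Sum>i<n. D i \<omega>) ^ 4) \<le> n * K + 3 * (real n)\<^sup>2 * V\<^sup>2"
proof -
  have D_measurable: "D i \<in> borel_measurable M" if "i < n" for i
    using indep that unfolding indep_vars_def by auto
  have "m \<le> n \<Longrightarrow> integrable M (\<lambda>\<omega>. (\<Sum>i<m. D i \<omega>) ^ 4) \<and>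
     expectation (\<lambda>\<omega>. \<Sum>i<m. D i \<omega>) = 0 \<and>
     expectation (\<lambda>\<omega>. (\<Sum>i<m. D i \<omega>)\<^sup>2) = m * V \<and>
     expectation (\<lambda>\<omega>. (\<Sum>i<m. D i \<omega>) ^ 4) \<le> m * K + 3 * (real m)\<^sup>2 * V\<^sup>2" for m
  proof (induction m)
    case (Suc m)
    then have "m < n" by simp
    define A where "A \<omega> = (\<Sum>i<m. D i \<omega>)" for \<omega>
    have [measurable]: "A \<in> borel_measurable M"
      unfolding A_def using \<open>m < n\<close> by (intro borel_measurable_sum) (auto intro: D_measurable)
    from Suc have IH: "integrable M (\<lambda>\<omega>. A \<omega> ^ 4)" "expectation A = 0"
        "expectation (\<lambda>\<omega>. A \<omega> ^ 2) = m * V" "expectation (\<lambda>\<omega>. A \<omega> ^ 4) \<le> m * K + 3 * (real m)\<^sup>2 * V\<^sup>2"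
      by (simp_all add: A_def[abs_def])
    have indep_step: "indep_var borel A borel (D m)"
      using indep_var_partial_sum[OF indep \<open>m < n\<close>] by (simp add: A_def[abs_def])
    note step = indep_var_centred_add_moments[OF indep_step IH(1) D4[OF \<open>m < n\<close>] IH(2) E1[OF \<open>m < n\<close>]]
    have I1: "integrable M A" "integrable M (D m)"
      using integrable_power_le_even_power[OF _ IH(1), of 1]
        integrable_power_le_even_power[OF D_measurable[OF \<open>m < n\<close>] D4[OF \<open>m < n\<close>], of 1] by auto
    have "expectation (\<lambda>\<omega>. (A \<omega> + D m \<omega>) ^ 4) \<le> (m * K + 3 * (real m)\<^sup>2 * V\<^sup>2) + 6 * m * V\<^sup>2 + K"
      using step(3) IH(3,4) E2[OF \<open>m < n\<close>] E4[OF \<open>m < n\<close>] by (simp add: power2_eq_square)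
    also have "\<dots> \<le> Suc m * K + 3 * (real (Suc m))\<^sup>2 * V\<^sup>2"
      by (simp add: power2_eq_square algebra_simps)
    finally have E4_step: "expectation (\<lambda>\<omega>. (A \<omega> + D m \<omega>) ^ 4) \<le> Suc m * K + 3 * (real (Suc m))\<^sup>2 * V\<^sup>2" .
    have sum_Suc: "(\<Sum>i<Suc m. D i \<omega>) = A \<omega> + D m \<omega>" for \<omega>
      by (simp add: A_def)
    show ?case
      unfolding sum_Suc using step(1,2) E4_step I1 IH(2,3) E1[OF \<open>m < n\<close>] E2[OF \<open>m < n\<close>]
      by (simp add: algebra_simps)
  qed simp
  then show "integrable M (\<lambda>\<omega>. (\<Sum>i<n. D i \<omega>) ^ 4)"
    and "expectation (\<lambda>\<omega>. (\<Sum>i<n. D i \<omega>)\<^sup>2) = n * V"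
    and "expectation (\<lambda>\<omega>. (\<Sum>i<n. D i \<omega>) ^ 4) \<le> n * K + 3 * (real n)\<^sup>2 * V\<^sup>2"
    by auto
qed

end

lemma fourth_power_diff_le: "((w::real) - p) ^ 4 \<le> 8 * w ^ 4 + 8 * p ^ 4"
proof -
  have sq_sum_le: "((u::real) + v)\<^sup>2 \<le> 2 * u\<^sup>2 + 2 * v\<^sup>2" for u v
    using zero_le_power2[of "u - v"] by (simp add: power2_eq_square algebra_simps)
  have "((w - p)\<^sup>2)\<^sup>2 \<le> (2 * w\<^sup>2 + 2 * p\<^sup>2)\<^sup>2"
    using sq_sum_le[of w "-p"] by (intro power_mono) auto
  also have "\<dots> \<le> 2 * (2 * w\<^sup>2)\<^sup>2 + 2 * (2 * p\<^sup>2)\<^sup>2" by (rule sq_sum_le)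
  finally show ?thesis by (simp add: power_mult_distrib flip: power_mult)
qed

lemma fourth_power_mult_le: "((y::real) * z) ^ 4 \<le> (y ^ 8 + z ^ 8) / 2"
proof -
  have "2 * (y ^ 4 * z ^ 4) \<le> (y ^ 4)\<^sup>2 + (z ^ 4)\<^sup>2"
    using zero_le_power2[of "y ^ 4 - z ^ 4"] by (simp add: power2_eq_square algebra_simps)
  then show ?thesis by (simp add: power_mult_distrib flip: power_mult)
qed


lemma sq_max_zero_sub_ge:
  fixes t \<phi> :: real
  assumes "\<phi> > 0"
  shows "(t - \<phi>)\<^sup>2 - (t - \<phi>) ^ 4 / \<phi>\<^sup>2 \<le> (max t 0 - \<phi>)\<^sup>2"
proof (cases "t \<ge> 0")
  case True
  then show ?thesis by (simp add: zero_le_even_power)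
next
  case False
  then have "\<phi>\<^sup>2 \<le> (t - \<phi>)\<^sup>2"
    using assms power_mono[of \<phi> "\<phi> - t" 2] by (simp add: power2_commute)
  then have "(t - \<phi>)\<^sup>2 * 1 \<le> (t - \<phi>)\<^sup>2 * ((t - \<phi>)\<^sup>2 / \<phi>\<^sup>2)"
    using assms by (intro mult_left_mono) auto
  then have "(t - \<phi>)\<^sup>2 \<le> (t - \<phi>) ^ 4 / \<phi>\<^sup>2"
    by (simp add: power2_eq_square power4_eq_xxxx)
  moreover have "(max t 0 - \<phi>)\<^sup>2 = \<phi>\<^sup>2" using False by simp
  ultimately show ?thesis using zero_le_power2[of \<phi>] by linarith
qed

context prob_space
begin

lemma truncation_risk_lower_bound:
  fixes T :: "'a \<Rightarrow> real"
  assumes [measurable]: "T \<in> borel_measurable M"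
    and I4: "integrable M (\<lambda>\<omega>. (T \<omega> - \<phi>) ^ 4)" and "\<phi> > 0"
  shows "expectation (\<lambda>\<omega>. (T \<omega> - \<phi>)\<^sup>2) - expectation (\<lambda>\<omega>. (T \<omega> - \<phi>) ^ 4) / \<phi>\<^sup>2
    \<le> expectation (\<lambda>\<omega>. (max (T \<omega>) 0 - \<phi>)\<^sup>2)"
proof -
  have I2: "integrable M (\<lambda>\<omega>. (T \<omega> - \<phi>)\<^sup>2)"
    by (rule integrable_power_le_even_power[OF _ I4]) auto
  have trunc_le: "(max t 0 - \<phi>)\<^sup>2 \<le> (t - \<phi>)\<^sup>2 + \<phi>\<^sup>2" for t
    by (cases "t \<ge> 0") auto
  have I_trunc: "integrable M (\<lambda>\<omega>. (max (T \<omega>) 0 - \<phi>)\<^sup>2)"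
  proof (rule Bochner_Integration.integrable_bound)
    show "integrable M (\<lambda>\<omega>. (T \<omega> - \<phi>)\<^sup>2 + \<phi>\<^sup>2)" using I2 by simp
    show "AE \<omega> in M. norm ((max (T \<omega>) 0 - \<phi>)\<^sup>2) \<le> norm ((T \<omega> - \<phi>)\<^sup>2 + \<phi>\<^sup>2)"
      using trunc_le by (intro AE_I2) simp
  qed measurable
  have "expectation (\<lambda>\<omega>. (T \<omega> - \<phi>)\<^sup>2 - (T \<omega> - \<phi>) ^ 4 / \<phi>\<^sup>2) \<le> expectation (\<lambda>\<omega>. (max (T \<omega>) 0 - \<phi>)\<^sup>2)"
    by (rule integral_mono[OF Bochner_Integration.integrable_diff[OF I2 integrable_divide[OF I4]] I_trunc
          sq_max_zero_sub_ge[OF \<open>\<phi> > 0\<close>]])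
  then show ?thesis using I2 I4 by simp
qed

lemma indep_sample_mean_moments:
  fixes W :: "nat \<Rightarrow> 'a \<Rightarrow> real"
  assumes indep: "indep_vars (\<lambda>_. borel) W {..<n}" and "n \<ge> 1"
    and I4: "\<And>i. i < n \<Longrightarrow> integrable M (\<lambda>\<omega>. (W i \<omega> - \<mu>) ^ 4)"
    and E1: "\<And>i. i < n \<Longrightarrow> expectation (\<lambda>\<omega>. W i \<omega> - \<mu>) = 0"
    and E2: "\<And>i. i < n \<Longrightarrow> expectation (\<lambda>\<omega>. (W i \<omega> - \<mu>)\<^sup>2) = V"
    and E4: "\<And>i. i < n \<Longrightarrow> expectation (\<lambda>\<omega>. (W i \<omega> - \<mu>) ^ 4) \<le> K"
  defines "T \<equiv> \<lambda>\<omega>. (1 / real n) * (\<Sum>i<n. W i \<omega>)"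
  shows "integrable M (\<lambda>\<omega>. (T \<omega> - \<mu>) ^ 4)"
    and "expectation (\<lambda>\<omega>. (T \<omega> - \<mu>)\<^sup>2) = V / n"
    and "expectation (\<lambda>\<omega>. (T \<omega> - \<mu>) ^ 4) \<le> (K + 3 * V\<^sup>2) / (real n)\<^sup>2"
proof -
  define D where "D i \<omega> = W i \<omega> - \<mu>" for i \<omega>
  have "indep_vars (\<lambda>_. borel) D {..<n}"
    unfolding D_def by (rule indep_vars_compose2[OF indep]) measurable
  have sum_moments: "integrable M (\<lambda>\<omega>. (\<Sum>i<n. D i \<omega>) ^ 4)"
      "expectation (\<lambda>\<omega>. (\<Sum>i<n. D i \<omega>)\<^sup>2) = n * V"
      "expectation (\<lambda>\<omega>. (\<Sum>i<n. D i \<omega>) ^ 4) \<le> n * K + 3 * (real n)\<^sup>2 * V\<^sup>2"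
    by (rule centred_indep_sum_moments[OF \<open>indep_vars (\<lambda>_. borel) D {..<n}\<close>, of V K];
        simp add: D_def[abs_def] I4 E1 E2 E4)+
  have "T \<omega> - \<mu> = (\<Sum>i<n. D i \<omega>) / n" for \<omega>
    using \<open>n \<ge> 1\<close> by (simp add: T_def D_def sum_subtractf field_simps)
  then have deviation_power: "(T \<omega> - \<mu>) ^ k = (\<Sum>i<n. D i \<omega>) ^ k / real n ^ k" for \<omega> k
    by (simp add: power_divide)
  show "integrable M (\<lambda>\<omega>. (T \<omega> - \<mu>) ^ 4)"
    unfolding deviation_power using sum_moments(1) by simp
  show "expectation (\<lambda>\<omega>. (T \<omega> - \<mu>)\<^sup>2) = V / n"
    unfolding deviation_power using sum_moments(2) \<open>n \<ge> 1\<close> by (simp add: power2_eq_square)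
  have "0 \<le> expectation (\<lambda>\<omega>. (W 0 \<omega> - \<mu>) ^ 4)"
    by (simp add: integral_nonneg_AE zero_le_even_power)
  also have "\<dots> \<le> K"
    using E4[of 0] \<open>n \<ge> 1\<close> by simp
  finally have "real n * K \<le> (real n)\<^sup>2 * K"
    using \<open>n \<ge> 1\<close> by (intro mult_right_mono) (auto simp: power2_eq_square)
  then have "n * K + 3 * (real n)\<^sup>2 * V\<^sup>2 \<le> (real n)\<^sup>2 * (K + 3 * V\<^sup>2)"
    by (simp add: algebra_simps)
  then have "(n * K + 3 * (real n)\<^sup>2 * V\<^sup>2) / real n ^ 4 \<le> (real n)\<^sup>2 * (K + 3 * V\<^sup>2) / real n ^ 4"
    by (rule divide_right_mono) simp
  also have "\<dots> = (K + 3 * V\<^sup>2) / (real n)\<^sup>2"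
    using \<open>n \<ge> 1\<close> by (simp add: power2_eq_square power4_eq_xxxx)
  finally have "(n * K + 3 * (real n)\<^sup>2 * V\<^sup>2) / real n ^ 4 \<le> (K + 3 * V\<^sup>2) / (real n)\<^sup>2" .
  moreover have "expectation (\<lambda>\<omega>. (T \<omega> - \<mu>) ^ 4) \<le> (n * K + 3 * (real n)\<^sup>2 * V\<^sup>2) / real n ^ 4"
    unfolding deviation_power using sum_moments(3) by (simp add: divide_right_mono)
  ultimately show "expectation (\<lambda>\<omega>. (T \<omega> - \<mu>) ^ 4) \<le> (K + 3 * V\<^sup>2) / (real n)\<^sup>2"
    by linarith
qed

end


lemma divide_square_le_divide_powr:
  assumes "c \<ge> 0" and "n \<ge> 1"
  shows "c / (real n)\<^sup>2 \<le> c / real n powr (3/2)"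
proof (rule divide_left_mono[OF _ \<open>c \<ge> 0\<close>])
  have "real n powr (3/2) \<le> real n powr 2"
    using \<open>n \<ge> 1\<close> by (intro powr_mono) auto
  then show "real n powr (3/2) \<le> (real n)\<^sup>2"
    using \<open>n \<ge> 1\<close> by (simp add: powr_realpow)
  show "0 < (real n)\<^sup>2 * real n powr (3/2)" using \<open>n \<ge> 1\<close> by simp
qed


lemma inner_matrix_vector_symmetric:
  fixes A :: "real^'n^'n"
  assumes "transpose A = A"
  shows "x \<bullet> (A *v y) = y \<bullet> (A *v x)"
  by (metis assms dot_lmul_matrix inner_commute transpose_matrix_vector)

lemma pos_def_mat_matrix_inv:
  fixes S :: "real^'p^'p"
  assumes "pos_def_mat S"
  shows "S ** matrix_inv S = mat 1" "matrix_inv S ** S = mat 1"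
    and "transpose (matrix_inv S) = matrix_inv S"
proof -
  have symm: "transpose S = S" using assms by (simp add: pos_def_mat_def)
  have "S *v x = 0 \<Longrightarrow> x = 0" for x
    using assms unfolding pos_def_mat_def by (metis inner_zero_right less_irrefl)
  then have "invertible S"
    using matrix_left_invertible_ker invertible_left_inverse by blast
  then have inv: "S ** matrix_inv S = mat 1 \<and> matrix_inv S ** S = mat 1"
    unfolding matrix_inv_def invertible_def by (rule someI_ex)
  then show "S ** matrix_inv S = mat 1" "matrix_inv S ** S = mat 1" by auto
  have "transpose (matrix_inv S) ** S = mat 1"
    using arg_cong[OF conjunct1[OF inv], of transpose] by (simp add: matrix_transpose_mul symm)
  have "transpose (matrix_inv S) = transpose (matrix_inv S) ** (S ** matrix_inv S)"
    using inv by (simp add: matrix_mul_rid)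
  also have "\<dots> = matrix_inv S"
    by (simp add: matrix_mul_assoc \<open>transpose (matrix_inv S) ** S = mat 1\<close> matrix_mul_lid)
  finally show "transpose (matrix_inv S) = matrix_inv S" .
qed

lemma pos_def_mat_quadratic_nonneg:
  assumes "pos_def_mat S"
  shows "0 \<le> a \<bullet> (S *v a)"
  using assms unfolding pos_def_mat_def by (cases "a = 0") (auto intro: less_imp_le)

lemma prec_diag_pos:
  assumes "pos_def_mat S"
  shows "0 < prec S $ j $ j"
proof -
  let ?e = "axis j (1::real)" and ?u = "matrix_inv S *v axis j (1::real)"
  have "S *v ?u = ?e"
    by (simp add: matrix_vector_mul_assoc pos_def_mat_matrix_inv[OF assms])
  then have "?u \<noteq> 0" by (auto simp: axis_eq_0_iff)
  have "prec S $ j $ j = ?e \<bullet> ?u"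
    by (simp add: prec_def inner_axis' matrix_vector_mult_basis column_def)
  also have "\<dots> = ?u \<bullet> (S *v ?u)"
    by (simp add: \<open>S *v ?u = ?e\<close> inner_commute)
  also have "\<dots> > 0" using assms \<open>?u \<noteq> 0\<close> unfolding pos_def_mat_def by blast
  finally show ?thesis .
qed

lemma phi_star_pos:
  assumes "pos_def_mat S"
  shows "0 < phi_star S j"
  using prec_diag_pos[OF assms] by (simp add: phi_star_def)

text \<open>\<open>B_star S\<close> rescales the columns of \<open>S\<^sup>-\<^sup>1\<close>, so \<open>S\<close> maps its \<open>j\<close>-th column to a multiple of \<open>e\<^sub>j\<close>.\<close>

lemma matrix_vector_B_star_column:
  assumes "pos_def_mat S"
  shows "S *v column j (B_star S) = phi_star S j *\<^sub>R axis j 1"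
proof -
  have "(S *v column j (B_star S)) $ i = (S ** prec S) $ i $ j / prec S $ j $ j" for i
    by (simp add: matrix_vector_mult_def matrix_matrix_mult_def column_def B_star_def sum_divide_distrib)
  then show ?thesis
    by (simp add: vec_eq_iff prec_def pos_def_mat_matrix_inv[OF assms] mat_def axis_def phi_star_def)
qed

lemma B_star_column_quadratic_forms:
  assumes "pos_def_mat S"
  shows "axis j 1 \<bullet> (S *v column j (B_star S)) = phi_star S j"
    and "column j (B_star S) \<bullet> (S *v column j (B_star S)) = phi_star S j"
  unfolding matrix_vector_B_star_column[OF assms] using prec_diag_pos[OF assms, of j]
  by (simp_all add: inner_axis column_def B_star_def)

lemma phi_RML_eq_truncated_mean:
  "phi_RML S n x j = max ((1 / real n) * (\<Sum>i<n. x i $ j * (column j (B_star S) \<bullet> x i))) 0"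
proof -
  let ?b = "column j (B_star S)"
  have "(sample_cov n x ** B_star S) $ j $ j = (\<Sum>k\<in>UNIV. ((1 / real n) * (\<Sum>i<n. x i $ j * x i $ k)) * ?b $ k)"
    by (simp add: matrix_matrix_mult_def sample_cov_def column_def sum_component)
  also have "\<dots> = (1 / real n) * (\<Sum>i<n. \<Sum>k\<in>UNIV. x i $ j * (x i $ k * ?b $ k))"
    by (subst sum.swap) (simp add: sum_distrib_left sum_distrib_right mult_ac)
  also have "\<dots> = (1 / real n) * (\<Sum>i<n. x i $ j * (?b \<bullet> x i))"
    by (simp add: inner_vec_def sum_distrib_left mult_ac)
  finally show ?thesis by (simp add: phi_RML_def)
qed

lemma mvn_density_measurable [measurable]: "mvn_density S \<in> borel_measurable borel"
  unfolding mvn_density_def divide_inverse[of "exp _"]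
  by (intro borel_measurable_continuous_onI continuous_intros linear_continuous_on
      matrix_vector_mul_linear) auto

text \<open>Completing the square in the exponent.\<close>

lemma mvn_density_mult_exp_inner:
  fixes S :: "real^'p^'p"
  assumes "pos_def_mat S"
  shows "mvn_density S x * exp (t * (a \<bullet> x))
       = mvn_density S (x - t *\<^sub>R (S *v a)) * exp (t\<^sup>2 * (a \<bullet> (S *v a)) / 2)"
proof -
  note inv = pos_def_mat_matrix_inv[OF assms]
  define \<Omega> where "\<Omega> = matrix_inv S"
  define v where "v = t *\<^sub>R (S *v a)"
  have \<Omega>v: "\<Omega> *v v = t *\<^sub>R a"
    by (simp add: v_def \<Omega>_def matrix_vector_mult_scaleR matrix_vector_mul_assoc inv)
  have v\<Omega>x: "v \<bullet> (\<Omega> *v x) = t * (a \<bullet> x)"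
    using inner_matrix_vector_symmetric[of \<Omega> v x] inv(3)
    by (simp add: \<Omega>_def[symmetric] \<Omega>v inner_commute)
  have "(x - v) \<bullet> (\<Omega> *v (x - v)) = x \<bullet> (\<Omega> *v x) - 2 * t * (a \<bullet> x) + t\<^sup>2 * (a \<bullet> (S *v a))"
    unfolding matrix_vector_mult_diff_distrib \<Omega>v inner_diff_left inner_diff_right inner_scaleR_right v\<Omega>x
    by (simp add: v_def power2_eq_square algebra_simps inner_commute[of x a] inner_commute[of "S *v a" a])
  then have "- (x \<bullet> (\<Omega> *v x)) / 2 + t * (a \<bullet> x)
      = - ((x - v) \<bullet> (\<Omega> *v (x - v))) / 2 + t\<^sup>2 * (a \<bullet> (S *v a)) / 2"
    by (simp add: field_simps)
  then show ?thesis
    unfolding mvn_density_def \<Omega>_def[symmetric] v_def[symmetric] times_divide_eq_left mult_exp_exp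
    by simp
qed

lemma nn_integral_lborel_translate:
  fixes f :: "'b::euclidean_space \<Rightarrow> ennreal"
  assumes [measurable]: "f \<in> borel_measurable borel"
  shows "(\<integral>\<^sup>+x. f (x - c) \<partial>lborel) = (\<integral>\<^sup>+x. f x \<partial>lborel)"
proof -
  have "(\<integral>\<^sup>+x. f x \<partial>lborel) = (\<integral>\<^sup>+x. f x \<partial>distr lborel borel ((+) (-c)))"
    by (simp add: lborel_distr_plus)
  also have "\<dots> = (\<integral>\<^sup>+x. f (-c + x) \<partial>lborel)"
    by (rule nn_integral_distr) auto
  finally show ?thesis by simp
qed

lemma (in prob_space) distributed_mvn_mgf:
  fixes S :: "real^'p^'p"
  assumes S: "pos_def_mat S" and X: "distributed M lborel X (\<lambda>x. ennreal (mvn_density S x))"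
  shows "(\<integral>\<^sup>+\<omega>. ennreal (exp (t * (a \<bullet> X \<omega>))) \<partial>M) = ennreal (exp (t\<^sup>2 * (a \<bullet> (S *v a)) / 2))"
proof -
  define v where "v = t *\<^sub>R (S *v a)"
  define E where "E = exp (t\<^sup>2 * (a \<bullet> (S *v a)) / 2)"
  have total: "(\<integral>\<^sup>+x. ennreal (mvn_density S x) \<partial>lborel) = 1"
    using distributed_emeasure[OF X, of UNIV] by (simp add: emeasure_space_1)
  have "(\<integral>\<^sup>+\<omega>. ennreal (exp (t * (a \<bullet> X \<omega>))) \<partial>M)
      = (\<integral>\<^sup>+x. ennreal (mvn_density S x) * ennreal (exp (t * (a \<bullet> x))) \<partial>lborel)"
    by (rule distributed_nn_integral[OF X, symmetric]) measurable
  also have "\<dots> = (\<integral>\<^sup>+x. ennreal (mvn_density S (x - v)) * ennreal E \<partial>lborel)"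
    by (intro nn_integral_cong)
      (simp add: ennreal_mult''[symmetric] mvn_density_mult_exp_inner[OF S] v_def E_def)
  also have "\<dots> = (\<integral>\<^sup>+x. ennreal (mvn_density S (x - v)) \<partial>lborel) * ennreal E"
    by (rule nn_integral_multc) measurable
  also have "\<dots> = ennreal E"
    using nn_integral_lborel_translate[of "\<lambda>x. ennreal (mvn_density S x)" v] total by simp
  finally show ?thesis by (simp add: E_def)
qed

lemma (in prob_space) distributed_mvn_inner_even_moment:
  fixes S :: "real^'p^'p"
  assumes S: "pos_def_mat S" and X: "distributed M lborel X (\<lambda>x. ennreal (mvn_density S x))"
  shows "integrable M (\<lambda>\<omega>. (a \<bullet> X \<omega>) ^ (2*k))"
    and "expectation (\<lambda>\<omega>. (a \<bullet> X \<omega>) ^ (2*k)) = fact (2*k) / (2^k * fact k) * (a \<bullet> (S *v a))^k"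
proof -
  have [measurable]: "X \<in> borel_measurable M"
    using distributed_measurable[OF X] by simp
  note moments = even_moments_of_gaussian_mgf[of "\<lambda>\<omega>. a \<bullet> X \<omega>" "a \<bullet> (S *v a)"]
  show "integrable M (\<lambda>\<omega>. (a \<bullet> X \<omega>) ^ (2*k))"
    and "expectation (\<lambda>\<omega>. (a \<bullet> X \<omega>) ^ (2*k)) = fact (2*k) / (2^k * fact k) * (a \<bullet> (S *v a))^k"
    by (rule moments; measurable?; simp add: pos_def_mat_quadratic_nonneg[OF S] distributed_mvn_mgf[OF S X])+
qed

text \<open>Isserlis' formula for two linear functionals \<open>Y = a\<bullet>X\<close>, \<open>Z = c\<bullet>X\<close>, obtained by
  polarisation: \<open>4YZ = (Y+Z)\<^sup>2 - (Y-Z)\<^sup>2\<close> and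
  \<open>12(YZ)\<^sup>2 = (Y+Z)\<^sup>4 + (Y-Z)\<^sup>4 - 2Y\<^sup>4 - 2Z\<^sup>4\<close>.\<close>

lemma (in prob_space) distributed_mvn_inner_product_moments:
  fixes S :: "real^'p^'p" and a c :: "real^'p"
  assumes S: "pos_def_mat S" and X: "distributed M lborel X (\<lambda>x. ennreal (mvn_density S x))"
  shows "integrable M (\<lambda>\<omega>. (a \<bullet> X \<omega>) * (c \<bullet> X \<omega>))"
    and "expectation (\<lambda>\<omega>. (a \<bullet> X \<omega>) * (c \<bullet> X \<omega>)) = a \<bullet> (S *v c)"
    and "integrable M (\<lambda>\<omega>. ((a \<bullet> X \<omega>) * (c \<bullet> X \<omega>))\<^sup>2)"
    and "expectation (\<lambda>\<omega>. ((a \<bullet> X \<omega>) * (c \<bullet> X \<omega>))\<^sup>2)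
      = (a \<bullet> (S *v a)) * (c \<bullet> (S *v c)) + 2 * (a \<bullet> (S *v c))\<^sup>2"
proof -
  note moment = distributed_mvn_inner_even_moment[OF S X]
  define Y where "Y \<omega> = a \<bullet> X \<omega>" for \<omega>
  define Z where "Z \<omega> = c \<bullet> X \<omega>" for \<omega>
  define \<sigma> q\<^sub>a q\<^sub>c where "\<sigma> = a \<bullet> (S *v c)" and "q\<^sub>a = a \<bullet> (S *v a)" and "q\<^sub>c = c \<bullet> (S *v c)"
  have symm: "c \<bullet> (S *v a) = \<sigma>"
    using inner_matrix_vector_symmetric[of S c a] S by (simp add: pos_def_mat_def \<sigma>_def)
  have "(a + c) \<bullet> (S *v (a + c)) = q\<^sub>a + 2 * \<sigma> + q\<^sub>c" and "(a - c) \<bullet> (S *v (a - c)) = q\<^sub>a - 2 * \<sigma> + q\<^sub>c"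
    by (simp_all add: matrix_vector_right_distrib matrix_vector_mult_diff_distrib inner_add_left
        inner_add_right inner_diff_left inner_diff_right symm q\<^sub>a_def q\<^sub>c_def \<sigma>_def)
  then have P: "integrable M (\<lambda>\<omega>. (Y \<omega> + Z \<omega>) ^ (2*k))"
      "expectation (\<lambda>\<omega>. (Y \<omega> + Z \<omega>) ^ (2*k)) = fact (2*k) / (2^k * fact k) * (q\<^sub>a + 2 * \<sigma> + q\<^sub>c) ^ k"
    and D: "integrable M (\<lambda>\<omega>. (Y \<omega> - Z \<omega>) ^ (2*k))"
      "expectation (\<lambda>\<omega>. (Y \<omega> - Z \<omega>) ^ (2*k)) = fact (2*k) / (2^k * fact k) * (q\<^sub>a - 2 * \<sigma> + q\<^sub>c) ^ k"
    for k
    using moment[of "a + c" k] moment[of "a - c" k]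
    by (simp_all add: Y_def Z_def inner_add_left inner_diff_left)
  have Y4: "integrable M (\<lambda>\<omega>. Y \<omega> ^ 4)" "expectation (\<lambda>\<omega>. Y \<omega> ^ 4) = 3 * q\<^sub>a\<^sup>2"
    and Z4: "integrable M (\<lambda>\<omega>. Z \<omega> ^ 4)" "expectation (\<lambda>\<omega>. Z \<omega> ^ 4) = 3 * q\<^sub>c\<^sup>2"
    using moment[of a 2] moment[of c 2] by (simp_all add: Y_def Z_def q\<^sub>a_def q\<^sub>c_def fact_numeral)
  have polar: "Y \<omega> * Z \<omega> = ((Y \<omega> + Z \<omega>)\<^sup>2 - (Y \<omega> - Z \<omega>)\<^sup>2) / 4"
    and polar2: "(Y \<omega> * Z \<omega>)\<^sup>2 = ((Y \<omega> + Z \<omega>) ^ 4 + (Y \<omega> - Z \<omega>) ^ 4 - 2 * Y \<omega> ^ 4 - 2 * Z \<omega> ^ 4) / 12" for \<omega>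
    by (simp_all add: power2_eq_square power4_eq_xxxx algebra_simps)
  show "integrable M (\<lambda>\<omega>. (a \<bullet> X \<omega>) * (c \<bullet> X \<omega>))"
    and "expectation (\<lambda>\<omega>. (a \<bullet> X \<omega>) * (c \<bullet> X \<omega>)) = a \<bullet> (S *v c)"
    using P[of 1] D[of 1] unfolding Y_def[symmetric] Z_def[symmetric] polar \<sigma>_def[symmetric] by simp_all
  show "integrable M (\<lambda>\<omega>. ((a \<bullet> X \<omega>) * (c \<bullet> X \<omega>))\<^sup>2)"
    and "expectation (\<lambda>\<omega>. ((a \<bullet> X \<omega>) * (c \<bullet> X \<omega>))\<^sup>2)
      = (a \<bullet> (S *v a)) * (c \<bullet> (S *v c)) + 2 * (a \<bullet> (S *v c))\<^sup>2"
    using P[of 2] D[of 2] Y4 Z4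
    unfolding Y_def[symmetric] Z_def[symmetric] polar2 \<sigma>_def[symmetric] q\<^sub>a_def[symmetric] q\<^sub>c_def[symmetric]
    by (simp_all add: fact_numeral power2_eq_square algebra_simps)
qed

lemma (in prob_space) distributed_mvn_inner_product_central_moments:
  fixes S :: "real^'p^'p" and a c :: "real^'p"
  assumes S: "pos_def_mat S" and X: "distributed M lborel X (\<lambda>x. ennreal (mvn_density S x))"
  defines "\<sigma> \<equiv> a \<bullet> (S *v c)" and "q\<^sub>a \<equiv> a \<bullet> (S *v a)" and "q\<^sub>c \<equiv> c \<bullet> (S *v c)"
    and "W \<equiv> \<lambda>\<omega>. (a \<bullet> X \<omega>) * (c \<bullet> X \<omega>)"
  shows "integrable M (\<lambda>\<omega>. (W \<omega> - \<sigma>) ^ 4)"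
    and "expectation (\<lambda>\<omega>. W \<omega> - \<sigma>) = 0"
    and "expectation (\<lambda>\<omega>. (W \<omega> - \<sigma>)\<^sup>2) = \<sigma>\<^sup>2 + q\<^sub>a * q\<^sub>c"
    and "expectation (\<lambda>\<omega>. (W \<omega> - \<sigma>) ^ 4) \<le> 420 * q\<^sub>a ^ 4 + 420 * q\<^sub>c ^ 4 + 8 * \<sigma> ^ 4"
proof -
  note W_moments = distributed_mvn_inner_product_moments[OF S X, of a c, folded W_def \<sigma>_def q\<^sub>a_def q\<^sub>c_def]
  have [measurable]: "X \<in> borel_measurable M"
    using distributed_measurable[OF X] by simp
  have [measurable]: "W \<in> borel_measurable M" unfolding W_def by measurable
  have eighth: "integrable M (\<lambda>\<omega>. (v \<bullet> X \<omega>) ^ 8)" "expectation (\<lambda>\<omega>. (v \<bullet> X \<omega>) ^ 8) = 105 * (v \<bullet> (S *v v)) ^ 4"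
    for v
    using distributed_mvn_inner_even_moment[OF S X, of v 4] by (simp_all add: fact_numeral)
  have bound: "(W \<omega> - \<sigma>) ^ 4 \<le> 4 * (a \<bullet> X \<omega>) ^ 8 + 4 * (c \<bullet> X \<omega>) ^ 8 + 8 * \<sigma> ^ 4" for \<omega>
    using fourth_power_diff_le[of "W \<omega>" \<sigma>] fourth_power_mult_le[of "a \<bullet> X \<omega>" "c \<bullet> X \<omega>"]
    by (simp add: W_def)
  have I_bound: "integrable M (\<lambda>\<omega>. 4 * (a \<bullet> X \<omega>) ^ 8 + 4 * (c \<bullet> X \<omega>) ^ 8 + 8 * \<sigma> ^ 4)"
    using eighth(1)[of a] eighth(1)[of c] by simp
  show I4: "integrable M (\<lambda>\<omega>. (W \<omega> - \<sigma>) ^ 4)"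
    by (rule Bochner_Integration.integrable_bound[OF I_bound])
      (use bound in \<open>auto intro!: AE_I2 simp: zero_le_even_power\<close>)
  have "expectation (\<lambda>\<omega>. (W \<omega> - \<sigma>) ^ 4) \<le> expectation (\<lambda>\<omega>. 4 * (a \<bullet> X \<omega>) ^ 8 + 4 * (c \<bullet> X \<omega>) ^ 8 + 8 * \<sigma> ^ 4)"
    by (rule integral_mono[OF I4 I_bound bound])
  also have "\<dots> = 420 * q\<^sub>a ^ 4 + 420 * q\<^sub>c ^ 4 + 8 * \<sigma> ^ 4"
    using eighth[of a] eighth[of c] by (simp add: prob_space q\<^sub>a_def q\<^sub>c_def)
  finally show "expectation (\<lambda>\<omega>. (W \<omega> - \<sigma>) ^ 4) \<le> 420 * q\<^sub>a ^ 4 + 420 * q\<^sub>c ^ 4 + 8 * \<sigma> ^ 4" .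
  show "expectation (\<lambda>\<omega>. W \<omega> - \<sigma>) = 0"
    using W_moments by (simp add: W_def prob_space)
  have "(\<lambda>\<omega>. (W \<omega> - \<sigma>)\<^sup>2) = (\<lambda>\<omega>. (W \<omega>)\<^sup>2 - 2 * \<sigma> * W \<omega> + \<sigma>\<^sup>2)"
    by (simp add: fun_eq_iff power2_eq_square algebra_simps)
  then show "expectation (\<lambda>\<omega>. (W \<omega> - \<sigma>)\<^sup>2) = \<sigma>\<^sup>2 + q\<^sub>a * q\<^sub>c"
    using W_moments by (simp add: W_def power2_eq_square prob_space)
qed

lemma (in prob_space) regression_sample_mean_moments:
  fixes S :: "real^'p^'p" and X :: "nat \<Rightarrow> 'a \<Rightarrow> real^'p" and j :: 'p
  assumes S: "pos_def_mat S" and "n \<ge> 1" and indep: "indep_vars (\<lambda>_. borel) X {..<n}"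
    and X: "\<And>i. i < n \<Longrightarrow> distributed M lborel (X i) (\<lambda>x. ennreal (mvn_density S x))"
  defines "T \<equiv> \<lambda>\<omega>. (1 / real n) * (\<Sum>i<n. X i \<omega> $ j * (column j (B_star S) \<bullet> X i \<omega>))"
    and "\<phi> \<equiv> phi_star S j" and "\<Sigma> \<equiv> S $ j $ j"
  shows "T \<in> borel_measurable M"
    and "integrable M (\<lambda>\<omega>. (T \<omega> - \<phi>) ^ 4)"
    and "expectation (\<lambda>\<omega>. (T \<omega> - \<phi>)\<^sup>2) = (\<phi>\<^sup>2 + \<phi> * \<Sigma>) / n"
    and "expectation (\<lambda>\<omega>. (T \<omega> - \<phi>) ^ 4)
      \<le> (420 * \<Sigma> ^ 4 + 428 * \<phi> ^ 4 + 3 * (\<phi>\<^sup>2 + \<phi> * \<Sigma>)\<^sup>2) / (real n)\<^sup>2"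
proof -
  define b where "b = column j (B_star S)"
  have forms: "axis j 1 \<bullet> (S *v axis j 1) = \<Sigma>" "axis j 1 \<bullet> (S *v b) = \<phi>" "b \<bullet> (S *v b) = \<phi>"
    using B_star_column_quadratic_forms[OF S, of j]
    by (simp_all add: \<Sigma>_def \<phi>_def b_def inner_axis' matrix_vector_mult_basis column_def)
  have indep_products: "indep_vars (\<lambda>_. borel) (\<lambda>i \<omega>. X i \<omega> $ j * (b \<bullet> X i \<omega>)) {..<n}"
    by (rule indep_vars_compose2[OF indep, of "\<lambda>_ x. x $ j * (b \<bullet> x)"]) measurable
  then show "T \<in> borel_measurable M"
    unfolding T_def b_def[symmetric]
    by (intro borel_measurable_times[OF borel_measurable_const borel_measurable_sum])
      (auto simp: indep_vars_def)
  have product_moments: "integrable M (\<lambda>\<omega>. (X i \<omega> $ j * (b \<bullet> X i \<omega>) - \<phi>) ^ 4)"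
      "expectation (\<lambda>\<omega>. X i \<omega> $ j * (b \<bullet> X i \<omega>) - \<phi>) = 0"
      "expectation (\<lambda>\<omega>. (X i \<omega> $ j * (b \<bullet> X i \<omega>) - \<phi>)\<^sup>2) = \<phi>\<^sup>2 + \<phi> * \<Sigma>"
      "expectation (\<lambda>\<omega>. (X i \<omega> $ j * (b \<bullet> X i \<omega>) - \<phi>) ^ 4) \<le> 420 * \<Sigma> ^ 4 + 428 * \<phi> ^ 4"
    if "i < n" for i
    using distributed_mvn_inner_product_central_moments[OF S X[OF that], of "axis j 1" b, unfolded forms]
    by (simp_all add: inner_axis' mult.commute)
  show "integrable M (\<lambda>\<omega>. (T \<omega> - \<phi>) ^ 4)"
    and "expectation (\<lambda>\<omega>. (T \<omega> - \<phi>)\<^sup>2) = (\<phi>\<^sup>2 + \<phi> * \<Sigma>) / n"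
    and "expectation (\<lambda>\<omega>. (T \<omega> - \<phi>) ^ 4)
      \<le> (420 * \<Sigma> ^ 4 + 428 * \<phi> ^ 4 + 3 * (\<phi>\<^sup>2 + \<phi> * \<Sigma>)\<^sup>2) / (real n)\<^sup>2"
    using indep_sample_mean_moments[OF indep_products \<open>n \<ge> 1\<close> product_moments]
    by (simp_all add: T_def b_def)
qed

theorem proposition2:
  assumes "CARD('p) \<ge> 2"
  shows "\<exists>g :: real \<Rightarrow> real \<Rightarrow> real.
    \<forall>(S :: real^'p^'p) (j :: 'p) (n :: nat) (M :: 'a measure) (X :: nat \<Rightarrow> 'a \<Rightarrow> real^'p).
      pos_def_mat S \<and> n \<ge> 1 \<and> prob_space M \<and>
      prob_space.indep_vars M (\<lambda>_. borel) X {..<n} \<and>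
      (\<forall>i<n. distributed M lborel (X i) (\<lambda>x. ennreal (mvn_density S x)))
      \<longrightarrow>
      prob_space.expectation M (\<lambda>\<omega>. (phi_RML S n (\<lambda>i. X i \<omega>) j - phi_star S j)\<^sup>2)
        \<ge> ((phi_star S j)\<^sup>2 + phi_star S j * S $ j $ j) / real n
           - g (phi_star S j) (S $ j $ j) / real n powr (3/2)"
proof (intro exI[of _ "\<lambda>\<phi> \<Sigma>. (420 * \<Sigma> ^ 4 + 428 * \<phi> ^ 4 + 3 * (\<phi>\<^sup>2 + \<phi> * \<Sigma>)\<^sup>2) / \<phi>\<^sup>2"]
    allI impI, elim conjE)
  fix S :: "real^'p^'p" and j n and M :: "'a measure" and X :: "nat \<Rightarrow> 'a \<Rightarrow> real^'p"
  assume S: "pos_def_mat S" and "n \<ge> 1" and "prob_space M"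
    and indep: "prob_space.indep_vars M (\<lambda>_. borel) X {..<n}"
    and X: "\<forall>i<n. distributed M lborel (X i) (\<lambda>x. ennreal (mvn_density S x))"
  interpret prob_space M by fact
  \<comment> \<open>The bound holds in every dimension.\<close>
  define \<phi> \<Sigma> where "\<phi> = phi_star S j" and "\<Sigma> = S $ j $ j"
  define T where "T \<omega> = (1 / real n) * (\<Sum>i<n. X i \<omega> $ j * (column j (B_star S) \<bullet> X i \<omega>))" for \<omega>
  define C where "C = 420 * \<Sigma> ^ 4 + 428 * \<phi> ^ 4 + 3 * (\<phi>\<^sup>2 + \<phi> * \<Sigma>)\<^sup>2"
  note mean = regression_sample_mean_moments[OF S \<open>n \<ge> 1\<close> indep X[rule_format], where j = j,
      folded T_def \<phi>_def \<Sigma>_def C_def]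
  have "\<phi> > 0" unfolding \<phi>_def by (rule phi_star_pos[OF S])
  have "expectation (\<lambda>\<omega>. (T \<omega> - \<phi>) ^ 4) \<le> C / n powr (3/2)"
    using mean(4) divide_square_le_divide_powr[OF _ \<open>n \<ge> 1\<close>, of C] by (simp add: C_def)
  then have "expectation (\<lambda>\<omega>. (T \<omega> - \<phi>) ^ 4) / \<phi>\<^sup>2 \<le> C / n powr (3/2) / \<phi>\<^sup>2"
    by (rule divide_right_mono) simp
  then have "(\<phi>\<^sup>2 + \<phi> * \<Sigma>) / n - C / n powr (3/2) / \<phi>\<^sup>2
      \<le> expectation (\<lambda>\<omega>. (T \<omega> - \<phi>)\<^sup>2) - expectation (\<lambda>\<omega>. (T \<omega> - \<phi>) ^ 4) / \<phi>\<^sup>2"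
    using mean(3) by linarith
  also have "\<dots> \<le> expectation (\<lambda>\<omega>. (phi_RML S n (\<lambda>i. X i \<omega>) j - \<phi>)\<^sup>2)"
    using truncation_risk_lower_bound[OF mean(1,2) \<open>\<phi> > 0\<close>]
    by (simp add: phi_RML_eq_truncated_mean T_def)
  finally show "((phi_star S j)\<^sup>2 + phi_star S j * S $ j $ j) / real n
      - (\<lambda>\<phi> \<Sigma>. (420 * \<Sigma> ^ 4 + 428 * \<phi> ^ 4 + 3 * (\<phi>\<^sup>2 + \<phi> * \<Sigma>)\<^sup>2) / \<phi>\<^sup>2) (phi_star S j) (S $ j $ j)
          / real n powr (3/2)
      \<le> expectation (\<lambda>\<omega>. (phi_RML S n (\<lambda>i. X i \<omega>) j - phi_star S j)\<^sup>2)"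
    by (simp add: C_def \<phi>_def \<Sigma>_def mult.commute)
qed

end
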